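(* Let $r\in\mathbb{C}$, let $\pi\in\mathrm{SL}_2(\mathbb{R})$ be parabolic with unique fixed point $\mathfrak a\in\mathbb{P}^1(\mathbb{R})$, and let $\lambda\in\mathbb{C}^*$. If $h\in\mathcal{D}^{\mathrm{fs}}_{2-r}$ satisfies $\lambda^{-1}h|_{2-r}\pi-h\in\mathcal{D}^\omega_{2-r}$, then $\mathrm{bsing}\,h\subset\{\mathfrak a\}$.
   Context: $\mathbb{H}^-$ is the lower half-plane. For $g=\begin{pmatrix}a&b\\c&d\end{pmatrix}\in\mathrm{SL}_2(\mathbb{R})$ and a function $\varphi$ on $\mathbb{H}^-$, $(\varphi|_{2-r}g)(t)=(ct+d)^{r-2}\varphi(gt)$ with $\arg(ct+d)\in[-\pi,\pi)$. Let $P\varphi(t)=(i-t)^{2-r}\varphi(t)$ with $\arg(i-t)\in(-\pi/2,3\pi/2)$. $\mathcal{D}^\omega_{2-r}$: holomorphic $\varphi$ on $\mathbb{H}^-$ such that $P\varphi$ extends holomorphically to an open neighbourhood of $\mathbb{H}^-\cup\mathbb{P}^1(\mathbb{R})$ in $\mathbb{P}^1(\mathbb{C})$. For finite $E\subset\mathbb{P}^1(\mathbb{R})$, $\mathcal{D}^\omega_{2-r}[E]$: holomorphic $\varphi$ on $\mathbb{H}^-$ such that $P\varphi$ extends holomorphically to an open subset of $\mathbb{P}^1(\mathbb{C})$ containing $\mathbb{H}^-\cup(\mathbb{P}^1(\mathbb{R})\setminus E)$; $\mathcal{D}^{\mathrm{fs}}_{2-r}$ is the union over all finite $E$. For $\varphi\in\mathcal{D}^{\mathrm{fs}}_{2-r}$,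 $\mathrm{bsing}\,\varphi$ is the minimal finite set $E$ with $\varphi\in\mathcal{D}^\omega_{2-r}[E]$ (elements are identified with their restrictions to $\mathbb{H}^-$). *)

theory Defs
  imports "HOL-Complex_Analysis.Complex_Analysis"
begin

definition Hm :: "complex set" where
  "Hm = {t. Im t < 0}"

definition arg_lo :: "complex \<Rightarrow> real" where
  "arg_lo z = (if Arg z = pi then - pi else Arg z)"

definition pow_lo :: "complex \<Rightarrow> complex \<Rightarrow> complex" where
  "pow_lo z s = (if z = 0 then 0
     else exp (s * (complex_of_real (ln (cmod z)) + \<i> * complex_of_real (arg_lo z))))"

definition slash :: "complex \<Rightarrow> real \<Rightarrow> real \<Rightarrow> real \<Rightarrow> real \<Rightarrow> (complex \<Rightarrow> complex) \<Rightarrow> complex \<Rightarrow> complex" where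
  "slash r a b c d \<phi> t =
     pow_lo (of_real c * t + of_real d) (r - 2) *
     \<phi> ((of_real a * t + of_real b) / (of_real c * t + of_real d))"

text \<open>P phi (t) = (i - t)^(2-r) phi(t); on Hm, i - t has argument in (0, pi), so the
  principal branch agrees with the branch arg in (-pi/2, 3pi/2).\<close>
definition Pf :: "complex \<Rightarrow> (complex \<Rightarrow> complex) \<Rightarrow> complex \<Rightarrow> complex" where
  "Pf r \<phi> t = (\<i> - t) powr (2 - r) * \<phi> t"

text \<open>P^1(R) is modelled as real option (None = infinity).
  D^omega_{2-r}[E]: phi holomorphic on Hm and P phi extends holomorphically to an open subset
  of P^1(C) containing Hm and P^1(R) - E.  The part of the open set in C is U; if infinity is
  not in E the extension is holomorphic at infinity (chart w = -1/t).\<close>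
definition DomegaE :: "complex \<Rightarrow> real option set \<Rightarrow> (complex \<Rightarrow> complex) \<Rightarrow> bool" where
  "DomegaE r E \<phi> \<longleftrightarrow> \<phi> holomorphic_on Hm \<and>
     (\<exists>U F. open U \<and> Hm \<subseteq> U \<and> (\<forall>x. Some x \<notin> E \<longrightarrow> complex_of_real x \<in> U) \<and>
        F holomorphic_on U \<and> (\<forall>t\<in>Hm. F t = Pf r \<phi> t) \<and>
        (None \<notin> E \<longrightarrow> (\<exists>\<epsilon>>0. \<exists>G. G holomorphic_on ball 0 \<epsilon> \<and>
            (\<forall>w\<in>ball 0 \<epsilon> - {0}. - 1 / w \<in> U \<and> G w = F (- 1 / w)))))"

definition Domega :: "complex \<Rightarrow> (complex \<Rightarrow> complex) \<Rightarrow> bool" where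
  "Domega r \<phi> \<longleftrightarrow> DomegaE r {} \<phi>"

definition Dfs :: "complex \<Rightarrow> (complex \<Rightarrow> complex) \<Rightarrow> bool" where
  "Dfs r \<phi> \<longleftrightarrow> (\<exists>E. finite E \<and> DomegaE r E \<phi>)"

definition bsing :: "complex \<Rightarrow> (complex \<Rightarrow> complex) \<Rightarrow> real option set" where
  "bsing r \<phi> = (THE E. finite E \<and> DomegaE r E \<phi> \<and>
                   (\<forall>E'. finite E' \<and> DomegaE r E' \<phi> \<longrightarrow> E \<subseteq> E'))"

definition fixed_P1R :: "real \<Rightarrow> real \<Rightarrow> real \<Rightarrow> real \<Rightarrow> real option \<Rightarrow> bool" where
  "fixed_P1R a b c d p = (case p of None \<Rightarrow> c = 0
                                   | Some x \<Rightarrow> c * x\<^sup>2 + (d - a) * x - b = 0)"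

definition parabolic :: "real \<Rightarrow> real \<Rightarrow> real \<Rightarrow> real \<Rightarrow> bool" where
  "parabolic a b c d \<longleftrightarrow> a * d - b * c = 1 \<and> \<bar>a + d\<bar> = 2 \<and>
     \<not> (a = d \<and> b = 0 \<and> c = 0)"

end

theory Submission
  imports Defs
begin

text \<open>Call \<open>\<phi>\<close> regular at p \<in> P^1(R) if P\<phi>, read in a chart at p, extends holomorphically
  across p. Gluing local extensions by analytic continuation from the lower half-plane shows
  that \<open>\<phi> \<in> D^\<omega>[E]\<close> iff \<open>\<phi>\<close> is holomorphic and regular off E, so bsing h is the finite set
  of points where h is not regular. The automorphy factor of the slash action extends
  holomorphically across P^1(R), hence h|\<pi> is regular at p whenever h is regular at \<pi> p.
  Writing h = h|\<pi> / \<mu> - (h|\<pi> / \<mu> - h) with the second term regular everywhere shows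
  that \<pi> maps bsing h into itself. Off its fixed point a parabolic \<pi> is a translation in a
  suitable coordinate, so it has no finite invariant set other than subsets of {\<aa>}.\<close>

lemma finite_invariant_subset_singleton:
  fixes f :: "'a \<Rightarrow> 'a" and H :: "'a \<Rightarrow> real"
  assumes shift: "\<And>p. p \<noteq> q \<Longrightarrow> f p \<noteq> q \<and> H (f p) = H p + \<delta>"
    and "\<delta> \<noteq> 0" and "finite S" and invariant: "f ` S \<subseteq> S"
  shows "S \<subseteq> {q}"
proof
  fix p assume "p \<in> S"
  show "p \<in> {q}"
  proof (rule ccontr)
    assume "p \<notin> {q}"
    have orbit: "(f ^^ n) p \<noteq> q \<and> H ((f ^^ n) p) = H p + real n * \<delta>" for n
      by (induction n) (use \<open>p \<notin> {q}\<close> shift in \<open>auto simp: algebra_simps\<close>)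
    have "inj (\<lambda>n. (f ^^ n) p)"
    proof (rule injI)
      fix m n assume "(f ^^ m) p = (f ^^ n) p"
      then have "H p + real m * \<delta> = H p + real n * \<delta>" using orbit[of m] orbit[of n] by metis
      then have "real m = real n" using \<open>\<delta> \<noteq> 0\<close> by simp
      then show "m = n" by simp
    qed
    moreover have "range (\<lambda>n. (f ^^ n) p) \<subseteq> S"
    proof safe
      fix n show "(f ^^ n) p \<in> S" by (induction n) (use \<open>p \<in> S\<close> invariant in auto)
    qed
    ultimately show False
      using \<open>finite S\<close> finite_subset range_inj_infinite by blast
  qed
qed

definition moebius_P1R :: "real \<Rightarrow> real \<Rightarrow> real \<Rightarrow> real \<Rightarrow> real option \<Rightarrow> real option" where
  "moebius_P1R a b c d p = (case p of
      None \<Rightarrow> if c = 0 then None else Some (a / c)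
    | Some x \<Rightarrow> if c * x + d = 0 then None else Some ((a * x + b) / (c * x + d)))"

lemma parabolic_trace_square: "parabolic a b c d \<Longrightarrow> (a + d)\<^sup>2 = 4"
  unfolding parabolic_def by (metis power2_abs power2_eq_square numeral_times_numeral semiring_norm(12,13))

lemma parabolic_translation_at_infinity:
  assumes par: "parabolic a b c d" and "c = 0"
  shows "b / d \<noteq> 0" and "moebius_P1R a b c d (Some x) = Some (x + b / d)"
proof -
  have "a * d = 1" using par \<open>c = 0\<close> by (simp add: parabolic_def)
  moreover have "(a - d)\<^sup>2 = (a + d)\<^sup>2 - 4 * (a * d)" by (simp add: power2_eq_square algebra_simps)
  ultimately have "a = d" using parabolic_trace_square[OF par] by simp
  then show "b / d \<noteq> 0" using par \<open>c = 0\<close> \<open>a * d = 1\<close> by (auto simp: parabolic_def)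
  show "moebius_P1R a b c d (Some x) = Some (x + b / d)"
    using \<open>c = 0\<close> \<open>a = d\<close> \<open>a * d = 1\<close> by (auto simp: moebius_P1R_def field_simps)
qed

text \<open>For c \<noteq> 0 the fixed point is x0 = (a - d) / (2 c), and the parabolic map acts on
  1 / (x - x0) as the translation by c e, where e = (a + d) / 2 = \<plusminus>1.\<close>
lemma parabolic_translation_finite:
  assumes par: "parabolic a b c d" and "c \<noteq> 0"
  defines "x0 \<equiv> (a - d) / (2 * c)" and "e \<equiv> (a + d) / 2"
  shows "fixed_P1R a b c d (Some x0)" and "c * e \<noteq> 0"
    and "moebius_P1R a b c d None = Some (x0 + 1 / (c * e))"
    and "x \<noteq> x0 \<Longrightarrow> c * x + d = 0 \<Longrightarrow> 1 / (x - x0) + c * e = 0"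
    and "x \<noteq> x0 \<Longrightarrow> c * x + d \<noteq> 0 \<Longrightarrow> moebius_P1R a b c d (Some x) = Some y \<Longrightarrow>
           y \<noteq> x0 \<and> 1 / (y - x0) = 1 / (x - x0) + c * e"
proof -
  have det: "a * d - b * c = 1" using par by (simp add: parabolic_def)
  have e2: "e * e = 1" using parabolic_trace_square[OF par] by (simp add: e_def power2_eq_square field_simps)
  have b: "b = c * x0\<^sup>2 + (d - a) * x0"
  proof -
    have "4 * c * (c * x0\<^sup>2 + (d - a) * x0) = - (a - d)\<^sup>2" using \<open>c \<noteq> 0\<close>
      by (simp add: x0_def power2_eq_square field_simps)
    also have "\<dots> = 4 * b * c - ((a + d)\<^sup>2 - 4)" using det by (simp add: power2_eq_square algebra_simps)
    finally show ?thesis using parabolic_trace_square[OF par] \<open>c \<noteq> 0\<close> by simp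
  qed
  then show "fixed_P1R a b c d (Some x0)" by (simp add: fixed_P1R_def)
  show "c * e \<noteq> 0" using e2 \<open>c \<noteq> 0\<close> by auto
  have "e \<noteq> 0" using e2 by auto
  then have inv_e: "1 / e = e" using e2 by (simp add: field_simps)
  have cx0: "c * x0 + d = e" and ax0: "a - c * x0 = e" using \<open>c \<noteq> 0\<close> by (simp_all add: x0_def e_def field_simps)
  show "moebius_P1R a b c d None = Some (x0 + 1 / (c * e))"
    using \<open>c \<noteq> 0\<close> ax0 inv_e by (simp add: moebius_P1R_def field_simps)
  show "1 / (x - x0) + c * e = 0" if "x \<noteq> x0" "c * x + d = 0"
  proof -
    have "x - x0 = - e / c" using that(2) cx0 \<open>c \<noteq> 0\<close> by (simp add: field_simps)
    then have "1 / (x - x0) = - c * (1 / e)" by simp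
    then show ?thesis using inv_e by simp
  qed
  show "y \<noteq> x0 \<and> 1 / (y - x0) = 1 / (x - x0) + c * e"
    if "x \<noteq> x0" "c * x + d \<noteq> 0" "moebius_P1R a b c d (Some x) = Some y"
  proof -
    have "a * x + b - x0 * (c * x + d) = e * (x - x0)"
      using b ax0 cx0 by (simp add: power2_eq_square algebra_simps)
    moreover have "y = (a * x + b) / (c * x + d)" using that by (simp add: moebius_P1R_def)
    ultimately have y: "y - x0 = e * (x - x0) / (c * x + d)" using that(2) by (simp add: field_simps)
    then have "y \<noteq> x0" using that(1,2) \<open>e \<noteq> 0\<close> by auto
    have "1 / (y - x0) = (c * x + d) * (1 / e) / (x - x0)" unfolding y by simp
    also have "\<dots> = (c * (x - x0) + e) * e / (x - x0)" unfolding inv_e by (simp add: algebra_simps flip: cx0)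
    also have "\<dots> = 1 / (x - x0) + c * e" using that(1) e2 by (simp add: field_simps)
    finally show ?thesis using \<open>y \<noteq> x0\<close> by simp
  qed
qed

lemma parabolic_translation_coordinate:
  assumes par: "parabolic a b c d" and unique: "\<forall>p. fixed_P1R a b c d p \<longrightarrow> p = q"
  obtains H :: "real option \<Rightarrow> real" and \<delta>
  where "\<delta> \<noteq> 0" "\<And>p. p \<noteq> q \<Longrightarrow> moebius_P1R a b c d p \<noteq> q \<and> H (moebius_P1R a b c d p) = H p + \<delta>"
proof (cases "c = 0")
  case True
  then have "q = None" using unique[rule_format, of None] by (simp add: fixed_P1R_def)
  note shift = parabolic_translation_at_infinity[OF par True]
  show ?thesis
  proof (rule that[of "b / d" "case_option 0 id"])
    show "b / d \<noteq> 0" by (fact shift(1))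
    fix p assume "p \<noteq> q"
    then obtain x where "p = Some x" using \<open>q = None\<close> by auto
    then show "moebius_P1R a b c d p \<noteq> q \<and> case_option 0 id (moebius_P1R a b c d p) = case_option 0 id p + b / d"
      using shift(2) \<open>q = None\<close> by simp
  qed
next
  case False
  define x0 where "x0 = (a - d) / (2 * c)"
  define e where "e = (a + d) / 2"
  note shift = parabolic_translation_finite[OF par False, folded x0_def e_def]
  have "q = Some x0" using unique shift(1) by simp
  show ?thesis
  proof (rule that[of "c * e" "case_option 0 (\<lambda>x. 1 / (x - x0))"])
    show "c * e \<noteq> 0" by (fact shift(2))
    fix p assume "p \<noteq> q"
    show "moebius_P1R a b c d p \<noteq> q \<and> (case moebius_P1R a b c d p of None \<Rightarrow> 0 | Some x \<Rightarrow> 1 / (x - x0))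
        = (case p of None \<Rightarrow> 0 | Some x \<Rightarrow> 1 / (x - x0)) + c * e"
    proof (cases p)
      case None
      have "1 / (x0 + 1 / (c * e) - x0) = c * e" by simp
      then show ?thesis using None shift(2,3) \<open>q = Some x0\<close> by simp
    next
      case (Some x)
      then have "x \<noteq> x0" using \<open>p \<noteq> q\<close> \<open>q = Some x0\<close> by simp
      show ?thesis
      proof (cases "c * x + d = 0")
        case True
        then have "moebius_P1R a b c d p = None" using Some by (simp add: moebius_P1R_def)
        then show ?thesis using Some shift(4)[OF \<open>x \<noteq> x0\<close> True] \<open>q = Some x0\<close> by simp
      next
        case False
        then obtain y where "moebius_P1R a b c d (Some x) = Some y" by (simp add: moebius_P1R_def)
        with shift(5)[OF \<open>x \<noteq> x0\<close> False] show ?thesis using Some \<open>q = Some x0\<close> by auto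
      qed
    qed
  qed
qed

definition P1_chart :: "real option \<Rightarrow> complex \<Rightarrow> complex" where
  "P1_chart p w = (case p of None \<Rightarrow> - 1 / w | Some x \<Rightarrow> of_real x + w)"

definition regular_at :: "complex \<Rightarrow> (complex \<Rightarrow> complex) \<Rightarrow> real option \<Rightarrow> bool" where
  "regular_at r \<phi> p \<longleftrightarrow> (\<exists>e>0. \<exists>G. G holomorphic_on ball 0 e \<and>
      (\<forall>w\<in>ball 0 e. Im w < 0 \<longrightarrow> G w = Pf r \<phi> (P1_chart p w)))"

lemma open_Hm: "open Hm"
  unfolding Hm_def by (rule open_halfspace_Im_lt)

lemma Im_neg_inverse_less_0_iff: "Im (- 1 / w) < 0 \<longleftrightarrow> Im w < 0"
  by (cases "w = 0") (simp_all add: Im_divide' divide_less_0_iff zero_less_divide_iff)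

lemma P1_chart_in_Hm_iff: "P1_chart p w \<in> Hm \<longleftrightarrow> Im w < 0"
  using Im_neg_inverse_less_0_iff[of w] by (cases p) (simp_all add: P1_chart_def Hm_def)

lemma not_nonpos_Reals_if_Im_nonzero: "Im z \<noteq> 0 \<Longrightarrow> z \<notin> \<real>\<^sub>\<le>\<^sub>0"
  by (simp add: complex_nonpos_Reals_iff)

lemma holomorphic_on_Pf:
  assumes "\<phi> holomorphic_on Hm"
  shows "Pf r \<phi> holomorphic_on Hm"
  unfolding Pf_def[abs_def] using assms
  by (intro holomorphic_intros) (auto simp: Hm_def intro!: not_nonpos_Reals_if_Im_nonzero)

lemma norm_neg_inverse_less_iff:
  fixes t :: complex
  assumes "e > 0" "t \<noteq> 0"
  shows "cmod (- 1 / t) < e \<longleftrightarrow> 1 / e < cmod t"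
  using assms by (simp add: norm_divide divide_less_eq mult.commute)

lemma neg_inverse_in_ball:
  assumes "e > 0" "1 / e < cmod t"
  shows "- 1 / t \<in> ball 0 e"
proof -
  have "t \<noteq> 0" using assms by (auto dest: order.strict_trans[rotated])
  then show ?thesis using assms norm_neg_inverse_less_iff[of e t] by simp
qed

lemma holomorphic_on_compose_neg_inverse:
  assumes "G holomorphic_on ball 0 e" "e > 0"
  shows "(\<lambda>t. G (- 1 / t)) holomorphic_on {t. 1 / e < cmod t}"
proof -
  have "(\<lambda>t. - 1 / t) ` {t. 1 / e < cmod t} \<subseteq> ball 0 e"
    using neg_inverse_in_ball \<open>e > 0\<close> by blast
  moreover have "(\<lambda>t. - 1 / t) holomorphic_on {t. 1 / e < cmod t}"
    using \<open>e > 0\<close> by (intro holomorphic_intros) (auto dest: order.strict_trans[rotated])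
  ultimately show ?thesis
    using holomorphic_on_compose_gen[unfolded o_def] assms(1) by blast
qed

lemma regular_at_real_extension:
  assumes "regular_at r \<phi> (Some x)"
  obtains \<rho> g where "\<rho> > 0" "g holomorphic_on ball (complex_of_real x) \<rho>"
    "\<And>t. t \<in> ball (complex_of_real x) \<rho> \<Longrightarrow> t \<in> Hm \<Longrightarrow> g t = Pf r \<phi> t"
proof -
  obtain e G where "e > 0" "G holomorphic_on ball 0 e"
    and G: "\<forall>w\<in>ball 0 e. Im w < 0 \<longrightarrow> G w = Pf r \<phi> (P1_chart (Some x) w)"
    using assms unfolding regular_at_def by blast
  have "(\<lambda>t. t - of_real x) ` ball (complex_of_real x) e \<subseteq> ball 0 e"
    by (auto simp: dist_norm norm_minus_commute)
  then have "(\<lambda>t. G (t - of_real x)) holomorphic_on ball (complex_of_real x) e"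
    by (intro holomorphic_on_compose_gen[unfolded o_def, OF _ \<open>G holomorphic_on ball 0 e\<close>] holomorphic_intros)
  moreover have "G (t - of_real x) = Pf r \<phi> t" if "t \<in> ball (of_real x) e" "t \<in> Hm" for t
    using G that by (auto simp: P1_chart_def Hm_def dist_norm norm_minus_commute)
  ultimately show ?thesis using that \<open>e > 0\<close> by blast
qed

lemma regular_at_infinity_extension:
  assumes "regular_at r \<phi> None"
  obtains R G where "R > 0" "G holomorphic_on ball 0 (1 / R)"
    "\<And>t. t \<in> Hm \<Longrightarrow> R < cmod t \<Longrightarrow> G (- 1 / t) = Pf r \<phi> t"
proof -
  obtain e G where "e > 0" "G holomorphic_on ball 0 e"
    and G: "\<forall>w\<in>ball 0 e. Im w < 0 \<longrightarrow> G w = Pf r \<phi> (P1_chart None w)"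
    using assms unfolding regular_at_def by blast
  have "G (- 1 / t) = Pf r \<phi> t" if "t \<in> Hm" "1 / e < cmod t" for t
    using G neg_inverse_in_ball[OF \<open>e > 0\<close> that(2)] Im_neg_inverse_less_0_iff[of t] that(1)
    by (simp add: P1_chart_def Hm_def)
  then show ?thesis using that[of "1 / e" G] \<open>e > 0\<close> \<open>G holomorphic_on ball 0 e\<close> by simp
qed

lemma DomegaE_imp_regular_at:
  assumes "DomegaE r E \<phi>" "p \<notin> E"
  shows "regular_at r \<phi> p"
proof -
  obtain U F where "open U" and U_real: "\<And>x. Some x \<notin> E \<Longrightarrow> complex_of_real x \<in> U"
      and "F holomorphic_on U" and F_Hm: "\<And>t. t \<in> Hm \<Longrightarrow> F t = Pf r \<phi> t"
      and at_infinity: "None \<notin> E \<Longrightarrow> \<exists>\<epsilon>>0. \<exists>G. G holomorphic_on ball 0 \<epsilon> \<and>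
            (\<forall>w\<in>ball 0 \<epsilon> - {0}. - 1 / w \<in> U \<and> G w = F (- 1 / w))"
    using assms(1) unfolding DomegaE_def by blast
  show ?thesis
  proof (cases p)
    case None
    then obtain \<epsilon> G where "\<epsilon> > 0" "G holomorphic_on ball 0 \<epsilon>"
        and G: "\<And>w. w \<in> ball 0 \<epsilon> - {0} \<Longrightarrow> G w = F (- 1 / w)"
      using at_infinity assms(2) by blast
    moreover have "G w = Pf r \<phi> (P1_chart p w)" if "w \<in> ball 0 \<epsilon>" "Im w < 0" for w
    proof -
      have "w \<noteq> 0" using \<open>Im w < 0\<close> by auto
      then show ?thesis
        using that G[of w] F_Hm P1_chart_in_Hm_iff[of p w] None by (simp add: P1_chart_def)
    qed
    ultimately show ?thesis unfolding regular_at_def by blast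
  next
    case (Some x)
    then obtain \<rho> where "\<rho> > 0" and ball: "ball (complex_of_real x) \<rho> \<subseteq> U"
      using U_real assms(2) \<open>open U\<close> openE by metis
    have "(\<lambda>w. F (of_real x + w)) holomorphic_on ball 0 \<rho>"
      using ball by (intro holomorphic_on_compose_gen[unfolded o_def, OF _ \<open>F holomorphic_on U\<close>]
          holomorphic_intros) (auto simp: dist_norm)
    moreover have "F (of_real x + w) = Pf r \<phi> (P1_chart p w)" if "Im w < 0" for w
      using that F_Hm P1_chart_in_Hm_iff[of p w] Some by (simp add: P1_chart_def)
    ultimately show ?thesis unfolding regular_at_def using \<open>\<rho> > 0\<close> by blast
  qed
qed

lemma open_meets_Hm_if_real_point:
  assumes "open S" "complex_of_real u \<in> S"
  shows "S \<inter> Hm \<noteq> {}"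
proof -
  obtain e where "e > 0" "ball (complex_of_real u) e \<subseteq> S" using assms openE by blast
  moreover have "dist (complex_of_real u) (of_real u - \<i> * of_real (e / 2)) < e"
    using \<open>e > 0\<close> by (simp add: dist_norm norm_mult)
  ultimately have "complex_of_real u - \<i> * of_real (e / 2) \<in> S \<inter> Hm"
    by (auto simp: Hm_def)
  then show ?thesis by blast
qed

lemma Re_in_ball_of_real: "t \<in> ball (complex_of_real x) e \<Longrightarrow> complex_of_real (Re t) \<in> ball (complex_of_real x) e"
  using abs_Re_le_cmod[of "complex_of_real x - t"] by (simp add: dist_norm flip: of_real_diff)

lemma holomorphic_eq_on_convex_through_real:
  assumes "open W" "convex W" "complex_of_real u \<in> W" "f holomorphic_on W" "g holomorphic_on W"
    and eq: "\<And>t. t \<in> W \<Longrightarrow> t \<in> Hm \<Longrightarrow> f t = g t" and "t \<in> W"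
  shows "f t = g t"
proof (rule analytic_continuation_open[of "W \<inter> Hm" W f g t])
  show "open (W \<inter> Hm)" using assms(1) open_Hm by (rule open_Int)
  show "W \<inter> Hm \<noteq> {}" using open_meets_Hm_if_real_point assms(1,3) .
  show "connected W" using assms(2) by (rule convex_connected)
  show "\<And>z. z \<in> W \<inter> Hm \<Longrightarrow> f z = g z" using eq by blast
qed (use assms in auto)

lemma holomorphic_eq_on_real_balls:
  assumes "f holomorphic_on ball (complex_of_real x) \<rho>" "g holomorphic_on ball (complex_of_real y) \<sigma>"
    and "\<And>t. t \<in> ball (complex_of_real x) \<rho> \<Longrightarrow> t \<in> ball (complex_of_real y) \<sigma> \<Longrightarrow> t \<in> Hm \<Longrightarrow> f t = g t"
    and "t \<in> ball (complex_of_real x) \<rho>" "t \<in> ball (complex_of_real y) \<sigma>"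
  shows "f t = g t"
proof (rule holomorphic_eq_on_convex_through_real[of "ball (complex_of_real x) \<rho> \<inter> ball (complex_of_real y) \<sigma>" "Re t" f g])
  show "f holomorphic_on ball (complex_of_real x) \<rho> \<inter> ball (complex_of_real y) \<sigma>"
    using assms(1) by (rule holomorphic_on_subset) blast
  show "g holomorphic_on ball (complex_of_real x) \<rho> \<inter> ball (complex_of_real y) \<sigma>"
    using assms(2) by (rule holomorphic_on_subset) blast
  show "complex_of_real (Re t) \<in> ball (complex_of_real x) \<rho> \<inter> ball (complex_of_real y) \<sigma>"
    using assms(4,5) Re_in_ball_of_real by blast
qed (use assms(3-5) in \<open>auto intro: convex_Int\<close>)

text \<open>A disc of radius at most 1/2 about a real point that meets \<open>{R + 1 < |t|}\<close> lies in
  \<open>{R < |t|}\<close>.\<close>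
lemma holomorphic_eq_on_real_ball_exterior:
  assumes "f holomorphic_on ball (complex_of_real x) \<rho>" "\<rho> \<le> 1 / 2" "g holomorphic_on {t. R < cmod t}"
    and eq: "\<And>t. t \<in> ball (complex_of_real x) \<rho> \<Longrightarrow> R < cmod t \<Longrightarrow> t \<in> Hm \<Longrightarrow> f t = g t"
    and "t \<in> ball (complex_of_real x) \<rho>" "R + 1 < cmod t"
  shows "f t = g t"
proof -
  have exterior: "ball (complex_of_real x) \<rho> \<subseteq> {t. R < cmod t}"
  proof safe
    fix s assume "s \<in> ball (complex_of_real x) \<rho>"
    then have "cmod (t - s) < 1"
      using assms(2,5) norm_triangle_lt[of "t - of_real x" "of_real x - s" 1]
      by (auto simp: dist_norm norm_minus_commute)
    then show "R < cmod s" using assms(6) norm_triangle_ineq2[of t s] by simp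
  qed
  have "complex_of_real x \<in> ball (complex_of_real x) \<rho>"
    using assms(5) by (auto dest: order.strict_trans1[OF zero_le_dist])
  show ?thesis
  proof (rule holomorphic_eq_on_convex_through_real[of "ball (complex_of_real x) \<rho>" x f g])
    show "g holomorphic_on ball (complex_of_real x) \<rho>"
      by (rule holomorphic_on_subset[OF assms(3) exterior])
    show "f s = g s" if "s \<in> ball (complex_of_real x) \<rho>" "s \<in> Hm" for s
      using eq that exterior by blast
  qed (use assms(1,5) \<open>complex_of_real x \<in> ball (complex_of_real x) \<rho>\<close> in simp_all)
qed

lemma holomorphic_on_glue:
  assumes "\<And>i. i \<in> I \<Longrightarrow> open (S i)" "\<And>i. i \<in> I \<Longrightarrow> f i holomorphic_on S i"
    and compatible: "\<And>i j t. i \<in> I \<Longrightarrow> j \<in> I \<Longrightarrow> t \<in> S i \<Longrightarrow> t \<in> S j \<Longrightarrow> f i t = f j t"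
  obtains F where "F holomorphic_on (\<Union>i\<in>I. S i)" "\<And>i t. i \<in> I \<Longrightarrow> t \<in> S i \<Longrightarrow> F t = f i t"
proof
  define F where "F t = f (SOME i. i \<in> I \<and> t \<in> S i) t" for t
  show F: "F t = f i t" if "i \<in> I" "t \<in> S i" for i t
    unfolding F_def using that someI[of "\<lambda>i. i \<in> I \<and> t \<in> S i"] compatible by blast
  have "F analytic_on (\<Union>i\<in>I. S i)"
    unfolding analytic_on_def
  proof safe
    fix i t assume "i \<in> I" "t \<in> S i"
    then obtain e where "e > 0" "ball t e \<subseteq> S i" using assms(1) openE by metis
    moreover have "F holomorphic_on ball t e"
      using holomorphic_on_subset[OF assms(2)[OF \<open>i \<in> I\<close>] \<open>ball t e \<subseteq> S i\<close>]
      by (rule holomorphic_transform) (use F \<open>i \<in> I\<close> \<open>ball t e \<subseteq> S i\<close> in auto)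
    ultimately show "\<exists>e>0. F holomorphic_on ball t e" by blast
  qed
  moreover have "open (\<Union>i\<in>I. S i)" using assms(1) by blast
  ultimately show "F holomorphic_on (\<Union>i\<in>I. S i)" by (simp add: analytic_on_open)
qed

locale local_extensions =
  fixes r :: complex and \<phi> :: "complex \<Rightarrow> complex" and E :: "real option set"
    and \<rho> :: "real \<Rightarrow> real" and g :: "real \<Rightarrow> complex \<Rightarrow> complex"
    and R :: real and G :: "complex \<Rightarrow> complex"
  assumes holomorphic: "\<phi> holomorphic_on Hm"
    and \<rho>: "\<And>x. Some x \<notin> E \<Longrightarrow> \<rho> x > 0" "\<And>x. Some x \<notin> E \<Longrightarrow> \<rho> x \<le> 1 / 2"
    and g_holo: "\<And>x. Some x \<notin> E \<Longrightarrow> g x holomorphic_on ball (complex_of_real x) (\<rho> x)"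
    and g_eq: "\<And>x t. Some x \<notin> E \<Longrightarrow> t \<in> ball (complex_of_real x) (\<rho> x) \<Longrightarrow> t \<in> Hm \<Longrightarrow> g x t = Pf r \<phi> t"
    and R: "None \<notin> E \<Longrightarrow> R > 0" and G_holo: "None \<notin> E \<Longrightarrow> G holomorphic_on ball 0 (1 / R)"
    and G_eq: "\<And>t. None \<notin> E \<Longrightarrow> t \<in> Hm \<Longrightarrow> R < cmod t \<Longrightarrow> G (- 1 / t) = Pf r \<phi> t"
begin

definition patches :: "real option option set" where
  "patches = insert None (Some ` (- E))"

definition patch :: "real option option \<Rightarrow> complex set" where
  "patch i = (case i of None \<Rightarrow> Hm | Some None \<Rightarrow> {t. R + 1 < cmod t}
     | Some (Some x) \<Rightarrow> ball (complex_of_real x) (\<rho> x))"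

definition patch_fun :: "real option option \<Rightarrow> complex \<Rightarrow> complex" where
  "patch_fun i = (case i of None \<Rightarrow> Pf r \<phi> | Some None \<Rightarrow> (\<lambda>t. G (- 1 / t)) | Some (Some x) \<Rightarrow> g x)"

lemma patches_cases:
  assumes "i \<in> patches"
  obtains "i = None" | "i = Some None" "None \<notin> E" | x where "i = Some (Some x)" "Some x \<notin> E"
  using assms unfolding patches_def by (cases i; cases "the i") auto

lemma exterior_holomorphic: "None \<notin> E \<Longrightarrow> (\<lambda>t. G (- 1 / t)) holomorphic_on {t. R < cmod t}"
  using holomorphic_on_compose_neg_inverse[OF G_holo] R by simp

lemma open_patch: "open (patch i)"
proof -
  have "open {t::complex. R + 1 < cmod t}" by (intro open_Collect_less continuous_intros)
  then show ?thesis using open_Hm by (auto simp: patch_def split: option.split)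
qed

lemma holomorphic_on_patch:
  assumes "i \<in> patches"
  shows "patch_fun i holomorphic_on patch i"
  using assms
proof (cases rule: patches_cases)
  case 1 then show ?thesis using holomorphic_on_Pf[OF holomorphic] by (simp add: patch_fun_def patch_def)
next
  case 2 then show ?thesis
    using exterior_holomorphic by (auto simp: patch_fun_def patch_def intro: holomorphic_on_subset)
next
  case (3 x) then show ?thesis using g_holo by (simp add: patch_fun_def patch_def)
qed

lemma patch_fun_eq_Pf:
  assumes "i \<in> patches" "t \<in> patch i" "t \<in> Hm"
  shows "patch_fun i t = Pf r \<phi> t"
  using assms(1)
proof (cases rule: patches_cases)
  case 1 then show ?thesis by (simp add: patch_fun_def)
next
  case 2 then show ?thesis using assms(2,3) G_eq by (simp add: patch_fun_def patch_def)
next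
  case (3 x) then show ?thesis using assms(2,3) g_eq by (simp add: patch_fun_def patch_def)
qed

lemma real_patch_eq_exterior_patch:
  assumes "Some x \<notin> E" "None \<notin> E" "t \<in> ball (complex_of_real x) (\<rho> x)" "R + 1 < cmod t"
  shows "g x t = G (- 1 / t)"
proof (rule holomorphic_eq_on_real_ball_exterior[OF g_holo[OF assms(1)] \<rho>(2)[OF assms(1)] exterior_holomorphic[OF assms(2)]])
  show "g x s = G (- 1 / s)" if "s \<in> ball (complex_of_real x) (\<rho> x)" "R < cmod s" "s \<in> Hm" for s
    using g_eq G_eq that assms(1,2) by simp
qed (use assms in simp_all)

lemma real_patches_agree:
  assumes "Some x \<notin> E" "Some y \<notin> E" "t \<in> ball (complex_of_real x) (\<rho> x)" "t \<in> ball (complex_of_real y) (\<rho> y)"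
  shows "g x t = g y t"
proof (rule holomorphic_eq_on_real_balls[OF g_holo[OF assms(1)] g_holo[OF assms(2)]])
  show "g x s = g y s" if "s \<in> ball (complex_of_real x) (\<rho> x)" "s \<in> ball (complex_of_real y) (\<rho> y)" "s \<in> Hm" for s
    using g_eq that assms(1,2) by simp
qed (use assms in simp_all)

lemma patch_funs_agree:
  assumes "i \<in> patches" "j \<in> patches" "t \<in> patch i" "t \<in> patch j"
  shows "patch_fun i t = patch_fun j t"
proof (cases "i = None \<or> j = None")
  case True
  then show ?thesis using assms patch_fun_eq_Pf by (auto simp: patch_def patch_fun_def)
next
  case False
  then obtain p q where pq: "i = Some p" "j = Some q" "p \<notin> E" "q \<notin> E"
    using assms(1,2) by (auto simp: patches_def)
  show ?thesis
  proof (cases p; cases q)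
    fix x y assume "p = Some x" "q = Some y"
    then show ?thesis using real_patches_agree[of x y t] pq assms(3,4) by (simp add: patch_def patch_fun_def)
  next
    fix x assume "p = Some x" "q = None"
    then show ?thesis using real_patch_eq_exterior_patch[of x t] pq assms(3,4) by (simp add: patch_def patch_fun_def)
  next
    fix y assume "p = None" "q = Some y"
    then show ?thesis using real_patch_eq_exterior_patch[of y t] pq assms(3,4) by (simp add: patch_def patch_fun_def)
  qed (use pq in simp)
qed

lemma glued_DomegaE: "DomegaE r E \<phi>"
proof -
  obtain F where F_holo: "F holomorphic_on (\<Union>i\<in>patches. patch i)"
    and F: "\<And>i t. i \<in> patches \<Longrightarrow> t \<in> patch i \<Longrightarrow> F t = patch_fun i t"
    using holomorphic_on_glue[of patches patch patch_fun] open_patch holomorphic_on_patch patch_funs_agree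
    by blast
  show ?thesis unfolding DomegaE_def
  proof (intro conjI exI[of _ "\<Union>i\<in>patches. patch i"] exI[of _ F] allI impI ballI)
    show "\<phi> holomorphic_on Hm" "F holomorphic_on (\<Union>i\<in>patches. patch i)" by (fact holomorphic F_holo)+
    show "open (\<Union>i\<in>patches. patch i)" using open_patch by blast
    show "Hm \<subseteq> (\<Union>i\<in>patches. patch i)" by (auto simp: patches_def patch_def)
    show "complex_of_real x \<in> (\<Union>i\<in>patches. patch i)" if "Some x \<notin> E" for x
    proof (rule UN_I)
      show "Some (Some x) \<in> patches" using that by (simp add: patches_def)
      show "complex_of_real x \<in> patch (Some (Some x))" using \<rho>[OF that] by (simp add: patch_def)
    qed
    show "F t = Pf r \<phi> t" if "t \<in> Hm" for t
      using F[of None t] that by (simp add: patches_def patch_def patch_fun_def)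
    assume "None \<notin> E"
    then have "Some None \<in> patches" "R > 0" using R by (simp_all add: patches_def)
    show "\<exists>\<epsilon>>0. \<exists>G. G holomorphic_on ball 0 \<epsilon> \<and>
            (\<forall>w\<in>ball 0 \<epsilon> - {0}. - 1 / w \<in> (\<Union>i\<in>patches. patch i) \<and> G w = F (- 1 / w))"
    proof (intro exI[of _ "1 / (R + 1)"] exI[of _ G] conjI ballI)
      show "1 / (R + 1) > 0" using \<open>R > 0\<close> by simp
      show "G holomorphic_on ball 0 (1 / (R + 1))"
        using G_holo[OF \<open>None \<notin> E\<close>] subset_ball[of "1 / (R + 1)" "1 / R" 0] \<open>R > 0\<close>
        by (auto simp: divide_simps intro: holomorphic_on_subset)
      fix w :: complex assume "w \<in> ball 0 (1 / (R + 1)) - {0}"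
      then have "- 1 / w \<in> patch (Some None)"
        using norm_neg_inverse_less_iff[of "1 / (R + 1)" "- 1 / w"] \<open>R > 0\<close> by (auto simp: patch_def)
      then show "- 1 / w \<in> (\<Union>i\<in>patches. patch i)" "G w = F (- 1 / w)"
        using \<open>Some None \<in> patches\<close> F[of "Some None" "- 1 / w"] by (auto simp: patch_fun_def)
    qed
  qed
qed

end

lemma regular_at_imp_DomegaE:
  assumes "\<phi> holomorphic_on Hm" and regular: "\<And>p. p \<notin> E \<Longrightarrow> regular_at r \<phi> p"
  shows "DomegaE r E \<phi>"
proof -
  have "\<forall>x. \<exists>\<rho> g. Some x \<notin> E \<longrightarrow> \<rho> > 0 \<and> g holomorphic_on ball (complex_of_real x) \<rho> \<and>
          (\<forall>t\<in>ball (complex_of_real x) \<rho>. t \<in> Hm \<longrightarrow> g t = Pf r \<phi> t)"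
    using regular_at_real_extension[OF regular] by metis
  then obtain \<rho> g where \<rho>: "\<And>x. Some x \<notin> E \<Longrightarrow> \<rho> x > 0"
    and g_holo: "\<And>x. Some x \<notin> E \<Longrightarrow> g x holomorphic_on ball (complex_of_real x) (\<rho> x)"
    and g_eq: "\<And>x t. Some x \<notin> E \<Longrightarrow> t \<in> ball (complex_of_real x) (\<rho> x) \<Longrightarrow> t \<in> Hm \<Longrightarrow> g x t = Pf r \<phi> t"
    by metis
  have "\<exists>R G. None \<notin> E \<longrightarrow> R > 0 \<and> G holomorphic_on ball 0 (1 / R) \<and>
          (\<forall>t\<in>Hm. R < cmod t \<longrightarrow> G (- 1 / t) = Pf r \<phi> t)"
    using regular_at_infinity_extension[OF regular] by metis
  then obtain R G where "None \<notin> E \<Longrightarrow> R > 0" "None \<notin> E \<Longrightarrow> G holomorphic_on ball 0 (1 / R)"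
    "\<And>t. None \<notin> E \<Longrightarrow> t \<in> Hm \<Longrightarrow> R < cmod t \<Longrightarrow> G (- 1 / t) = Pf r \<phi> t"
    by metis
  moreover have "ball (complex_of_real x) (min (\<rho> x) (1 / 2)) \<subseteq> ball (complex_of_real x) (\<rho> x)" for x
    by (rule subset_ball) simp
  ultimately have "local_extensions r \<phi> E (\<lambda>x. min (\<rho> x) (1 / 2)) g R G"
    using assms(1) \<rho> holomorphic_on_subset[OF g_holo] g_eq by unfold_locales auto
  then show ?thesis by (rule local_extensions.glued_DomegaE)
qed

lemma DomegaE_iff_regular_at:
  "DomegaE r E \<phi> \<longleftrightarrow> \<phi> holomorphic_on Hm \<and> (\<forall>p. p \<notin> E \<longrightarrow> regular_at r \<phi> p)"
  using DomegaE_imp_regular_at regular_at_imp_DomegaE by (metis DomegaE_def)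

abbreviation real_moebius :: "real \<Rightarrow> real \<Rightarrow> real \<Rightarrow> real \<Rightarrow> complex \<Rightarrow> complex" where
  "real_moebius a b c d \<equiv> moebius (of_real a) (of_real b) (of_real c) (of_real d)"

lemma moebius_denominator_nonzero:
  assumes "a * d - b * c = 1" "t \<in> Hm"
  shows "of_real c * t + of_real d \<noteq> 0"
proof (cases "c = 0")
  case True
  then show ?thesis using assms(1) by auto
next
  case False
  then have "Im (of_real c * t + of_real d) \<noteq> 0" using assms(2) by (simp add: Hm_def)
  then show ?thesis by (metis zero_complex.sel(2))
qed

lemma Im_real_moebius:
  assumes "a * d - b * c = 1"
  shows "Im (real_moebius a b c d t) = Im t / (cmod (of_real c * t + of_real d))\<^sup>2"
proof -
  have "Im (real_moebius a b c d t) = (a * Im t * (c * Re t + d) - (a * Re t + b) * (c * Im t)) / (cmod (of_real c * t + of_real d))\<^sup>2"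
    by (simp add: moebius_def Im_divide')
  also have "a * Im t * (c * Re t + d) - (a * Re t + b) * (c * Im t) = Im t * (a * d - b * c)"
    by (simp add: algebra_simps)
  finally show ?thesis using assms by simp
qed

lemma real_moebius_in_Hm:
  assumes "a * d - b * c = 1" "t \<in> Hm"
  shows "real_moebius a b c d t \<in> Hm"
  using Im_real_moebius[OF assms(1), of t] moebius_denominator_nonzero[OF assms] assms(2)
  by (simp add: Hm_def divide_neg_pos)

lemma holomorphic_on_fraction_near_0:
  fixes A B C D :: complex
  assumes "D \<noteq> 0"
  obtains \<delta> where "\<delta> > 0" "\<And>w. w \<in> ball 0 \<delta> \<Longrightarrow> C * w + D \<noteq> 0"
    "(\<lambda>w. (A * w + B) / (C * w + D)) holomorphic_on ball 0 \<delta>"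
proof -
  define \<delta> where "\<delta> = cmod D / (cmod C + 1)"
  have "\<delta> > 0" using assms unfolding \<delta>_def by (simp add: add_nonneg_pos)
  moreover have nonzero: "C * w + D \<noteq> 0" if "w \<in> ball 0 \<delta>" for w
  proof
    assume "C * w + D = 0"
    then have "cmod D = cmod C * cmod w" by (metis add_eq_0_iff norm_minus_cancel norm_mult)
    also have "\<dots> \<le> cmod C * \<delta>" using that by (intro mult_left_mono) auto
    also have "\<dots> < cmod D"
    proof -
      have "0 < cmod C + 1" by (simp add: add_nonneg_pos)
      then show ?thesis using assms by (simp add: \<delta>_def pos_divide_less_eq algebra_simps)
    qed
    finally show False by simp
  qed
  moreover have "(\<lambda>w. (A * w + B) / (C * w + D)) holomorphic_on ball 0 \<delta>"
    using nonzero by (intro holomorphic_intros) auto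
  ultimately show ?thesis using that by blast
qed

lemma unimodular_column_nonzero:
  fixes a b c d x :: real
  assumes "a * d - b * c = 1" "c * x + d = 0"
  shows "a * x + b \<noteq> 0"
proof
  assume "a * x + b = 0"
  have "x * (a * d - b * c) = d * (a * x + b) - b * (c * x + d)" by (simp add: algebra_simps)
  then have "x = 0" using assms \<open>a * x + b = 0\<close> by simp
  then show False using assms \<open>a * x + b = 0\<close> by simp
qed

lemma P1_chart_moebius_None:
  assumes det: "a * d - b * c = 1"
  obtains A C D :: complex where "D \<noteq> 0"
    "\<And>w. Im w < 0 \<Longrightarrow> C * w + D \<noteq> 0 \<Longrightarrow> P1_chart (moebius_P1R a b c d None) (A * w / (C * w + D)) = real_moebius a b c d (P1_chart None w)"
proof (cases "c = 0")
  case True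
  then have "a \<noteq> 0" "d \<noteq> 0" using det by auto
  show ?thesis
  proof (rule that[where A = "- of_real d" and C = "of_real b" and D = "- of_real a"])
    show "- complex_of_real a \<noteq> 0" using \<open>a \<noteq> 0\<close> by simp
    fix w :: complex assume "Im w < 0" "of_real b * w + - of_real a \<noteq> 0"
    moreover have "w \<noteq> 0" using \<open>Im w < 0\<close> by auto
    ultimately show "P1_chart (moebius_P1R a b c d None) (- of_real d * w / (of_real b * w + - of_real a)) =
        real_moebius a b c d (P1_chart None w)"
      using True \<open>w \<noteq> 0\<close> \<open>d \<noteq> 0\<close> by (simp add: P1_chart_def moebius_P1R_def moebius_def field_simps)
  qed
next
  case False
  have detc: "of_real a * of_real d - of_real b * of_real c = (1::complex)"
    by (metis det of_real_1 of_real_diff of_real_mult)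
  show ?thesis
  proof (rule that[where A = "- 1" and C = "of_real (c * d)" and D = "- of_real (c * c)"])
    show "- complex_of_real (c * c) \<noteq> 0" using False by simp
    fix w :: complex assume "Im w < 0" and nonzero: "of_real (c * d) * w + - of_real (c * c) \<noteq> 0"
    have "w \<noteq> 0" using \<open>Im w < 0\<close> by auto
    have "of_real (c * d) * w + - of_real (c * c) = of_real c * (of_real d * w - of_real c)"
      by (simp add: algebra_simps)
    with nonzero have "of_real d * w - of_real c \<noteq> 0" by auto
    have "P1_chart (moebius_P1R a b c d None) (- 1 * w / (of_real (c * d) * w + - of_real (c * c)))
        = of_real a / of_real c - w / (of_real c * (of_real d * w - of_real c))"
      using False by (simp add: P1_chart_def moebius_P1R_def algebra_simps)
    also have "\<dots> = (of_real a * (of_real d * w - of_real c) - w) / (of_real c * (of_real d * w - of_real c))"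
      using False \<open>of_real d * w - of_real c \<noteq> 0\<close> by (simp add: field_simps)
    also have "of_real a * (of_real d * w - of_real c) - w = of_real c * (of_real b * w - of_real a)"
      using detc by (simp add: algebra_simps)
    also have "of_real c * (of_real b * w - of_real a) / (of_real c * (of_real d * w - of_real c))
         = (of_real b * w - of_real a) / (of_real d * w - of_real c)" using False by simp
    also have "\<dots> = real_moebius a b c d (P1_chart None w)"
      using \<open>w \<noteq> 0\<close> \<open>of_real d * w - of_real c \<noteq> 0\<close> by (simp add: P1_chart_def moebius_def field_simps)
    finally show "P1_chart (moebius_P1R a b c d None) (- 1 * w / (of_real (c * d) * w + - of_real (c * c)))
        = real_moebius a b c d (P1_chart None w)" .
  qed
qed

lemma P1_chart_moebius_Some:
  assumes det: "a * d - b * c = 1"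
  obtains A C D :: complex where "D \<noteq> 0"
    "\<And>w. Im w < 0 \<Longrightarrow> C * w + D \<noteq> 0 \<Longrightarrow> P1_chart (moebius_P1R a b c d (Some x)) (A * w / (C * w + D)) = real_moebius a b c d (P1_chart (Some x) w)"
proof (cases "c * x + d = 0")
  case True
  have "a * x + b \<noteq> 0" using unimodular_column_nonzero[OF det True] .
  have "c \<noteq> 0" using True det by auto
  have d: "of_real d = - (of_real c * of_real x :: complex)"
    using True by (metis add_eq_0_iff of_real_add of_real_mult of_real_minus add.commute)
  show ?thesis
  proof (rule that[where A = "- of_real c" and C = "of_real a" and D = "of_real (a * x + b)"])
    show "complex_of_real (a * x + b) \<noteq> 0" using \<open>a * x + b \<noteq> 0\<close> of_real_eq_0_iff by blast
    fix w :: complex assume "Im w < 0" "of_real a * w + of_real (a * x + b) \<noteq> 0"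
    moreover have "w \<noteq> 0" using \<open>Im w < 0\<close> by auto
    ultimately have "P1_chart (moebius_P1R a b c d (Some x)) (- of_real c * w / (of_real a * w + of_real (a * x + b)))
        = (of_real a * w + of_real (a * x + b)) / (of_real c * w)"
      using True \<open>c \<noteq> 0\<close> \<open>w \<noteq> 0\<close> by (simp add: P1_chart_def moebius_P1R_def field_simps)
    also have "\<dots> = real_moebius a b c d (P1_chart (Some x) w)"
      by (simp add: P1_chart_def moebius_def d algebra_simps)
    finally show "P1_chart (moebius_P1R a b c d (Some x)) (- of_real c * w / (of_real a * w + of_real (a * x + b)))
        = real_moebius a b c d (P1_chart (Some x) w)" .
  qed
next
  case False
  define y where "y = (a * x + b) / (c * x + d)"
  have y: "of_real y * (of_real c * of_real x + of_real d) = (of_real a * of_real x + of_real b :: complex)"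
    using False by (simp add: y_def field_simps flip: of_real_mult of_real_add of_real_divide)
  show ?thesis
  proof (rule that[where A = "of_real (a - c * y)" and C = "of_real c" and D = "of_real (c * x + d)"])
    show "complex_of_real (c * x + d) \<noteq> 0" using False of_real_eq_0_iff by blast
    fix w :: complex assume "Im w < 0" "of_real c * w + of_real (c * x + d) \<noteq> 0"
    then have nonzero: "of_real c * (of_real x + w) + of_real d \<noteq> (0::complex)" by (simp add: algebra_simps)
    have "P1_chart (moebius_P1R a b c d (Some x)) (of_real (a - c * y) * w / (of_real c * w + of_real (c * x + d)))
        = of_real y + (of_real a - of_real c * of_real y) * w / (of_real c * (of_real x + w) + of_real d)"
      using False by (simp add: P1_chart_def moebius_P1R_def y_def algebra_simps)
    also have "\<dots> = (of_real y * (of_real c * of_real x + of_real d) + of_real a * w) / (of_real c * (of_real x + w) + of_real d)"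
      using nonzero by (simp add: field_simps)
    also have "\<dots> = real_moebius a b c d (P1_chart (Some x) w)"
      unfolding y by (simp add: P1_chart_def moebius_def algebra_simps)
    finally show "P1_chart (moebius_P1R a b c d (Some x)) (of_real (a - c * y) * w / (of_real c * w + of_real (c * x + d)))
        = real_moebius a b c d (P1_chart (Some x) w)" .
  qed
qed

lemma P1_chart_moebius:
  assumes det: "a * d - b * c = 1"
  obtains \<delta> m where "\<delta> > 0" "m holomorphic_on ball 0 \<delta>" "m 0 = 0"
    "\<And>w. w \<in> ball 0 \<delta> \<Longrightarrow> Im w < 0 \<Longrightarrow> P1_chart (moebius_P1R a b c d p) (m w) = real_moebius a b c d (P1_chart p w)"
proof -
  have "\<exists>A C D :: complex. D \<noteq> 0 \<and> (\<forall>w. Im w < 0 \<longrightarrow> C * w + D \<noteq> 0 \<longrightarrow>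
      P1_chart (moebius_P1R a b c d p) (A * w / (C * w + D)) = real_moebius a b c d (P1_chart p w))"
  proof (cases p)
    case None
    then show ?thesis using P1_chart_moebius_None[OF det] by metis
  next
    case (Some x)
    then show ?thesis using P1_chart_moebius_Some[OF det, of x] by metis
  qed
  then obtain A C D :: complex where "D \<noteq> 0" and conj: "\<And>w. Im w < 0 \<Longrightarrow> C * w + D \<noteq> 0 \<Longrightarrow>
      P1_chart (moebius_P1R a b c d p) (A * w / (C * w + D)) = real_moebius a b c d (P1_chart p w)"
    by blast
  obtain \<delta> where "\<delta> > 0" "\<And>w. w \<in> ball 0 \<delta> \<Longrightarrow> C * w + D \<noteq> 0"
    "(\<lambda>w. (A * w + 0) / (C * w + D)) holomorphic_on ball 0 \<delta>"
    using holomorphic_on_fraction_near_0[OF \<open>D \<noteq> 0\<close>] by blast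
  then show ?thesis using that[of \<delta> "\<lambda>w. A * w / (C * w + D)"] conj by auto
qed

definition log_lo :: "complex \<Rightarrow> complex" where
  "log_lo z = complex_of_real (ln (cmod z)) + \<i> * complex_of_real (arg_lo z)"

lemma pow_lo_eq_exp_log_lo: "z \<noteq> 0 \<Longrightarrow> pow_lo z s = exp (s * log_lo z)"
  by (simp add: pow_lo_def log_lo_def)

lemma log_lo_eq_Ln: "Arg z \<noteq> pi \<Longrightarrow> z \<noteq> 0 \<Longrightarrow> log_lo z = Ln z"
  by (simp add: log_lo_def arg_lo_def Ln_Arg)

lemma log_lo_eq_Ln_if_Im: "Im z \<noteq> 0 \<Longrightarrow> log_lo z = Ln z"
  by (rule log_lo_eq_Ln) (auto simp: Arg_eq_pi)

lemma exp_log_lo: assumes "z \<noteq> 0" shows "exp (log_lo z) = z"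
proof (cases "Arg z = pi")
  case False thus ?thesis using assms by (simp add: log_lo_eq_Ln)
next
  case True
  have "log_lo z = Ln z - 2 * of_real pi * \<i>"
    using True assms by (simp add: log_lo_def arg_lo_def Ln_Arg algebra_simps)
  hence "exp (log_lo z) = exp (Ln z) / exp (2 * of_real pi * \<i>)" by (simp add: exp_diff)
  thus ?thesis using assms by simp
qed

definition automorphy_log :: "real \<Rightarrow> real \<Rightarrow> real \<Rightarrow> real \<Rightarrow> complex \<Rightarrow> complex" where
  "automorphy_log a b c d t = Ln (\<i> - t) - log_lo (of_real c * t + of_real d) - Ln (\<i> - real_moebius a b c d t)"

lemma Im_i_minus_pos: "t \<in> Hm \<Longrightarrow> Im (\<i> - t) > 0"
  by (simp add: Hm_def)

lemma i_minus_nonzero: "t \<in> Hm \<Longrightarrow> \<i> - t \<noteq> 0"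
  using Im_i_minus_pos by fastforce

lemma Pf_slash:
  assumes det: "a * d - b * c = 1" and t: "t \<in> Hm"
  shows "Pf r (slash r a b c d \<phi>) t = exp ((2 - r) * automorphy_log a b c d t) * Pf r \<phi> (real_moebius a b c d t)"
proof -
  define g where "g = real_moebius a b c d t"
  define z where "z = of_real c * t + of_real d"
  have gH: "g \<in> Hm" unfolding g_def by (rule real_moebius_in_Hm[OF det t])
  have z0: "z \<noteq> 0" unfolding z_def by (rule moebius_denominator_nonzero[OF det t])
  have n1: "\<i> - t \<noteq> 0" using t by (rule i_minus_nonzero)
  have n3: "\<i> - g \<noteq> 0" using gH by (rule i_minus_nonzero)
  have "Pf r (slash r a b c d \<phi>) t = exp ((2-r) * Ln (\<i> - t)) * exp ((r - 2) * log_lo z) * \<phi> g"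
    using n1 z0 by (simp add: Pf_def slash_def powr_def pow_lo_eq_exp_log_lo g_def moebius_def z_def)
  also have "exp ((2-r) * Ln (\<i> - t)) * exp ((r - 2) * log_lo z)
      = exp ((2 - r) * (Ln (\<i> - t) - log_lo z - Ln (\<i> - g))) * exp ((2-r) * Ln (\<i> - g))"
    by (simp add: exp_add[symmetric] algebra_simps)
  finally show ?thesis using n3 by (simp add: Pf_def powr_def automorphy_log_def g_def z_def)
qed

lemma exp_automorphy_log:
  assumes det: "a * d - b * c = 1" and t: "t \<in> Hm"
  shows "exp (automorphy_log a b c d t) = (\<i> - t) / ((of_real c * \<i> - of_real a) * t + (of_real d * \<i> - of_real b))"
proof -
  define g where "g = real_moebius a b c d t"
  define z where "z = of_real c * t + of_real d"
  have gH: "g \<in> Hm" unfolding g_def by (rule real_moebius_in_Hm[OF det t])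
  have z0: "z \<noteq> 0" unfolding z_def by (rule moebius_denominator_nonzero[OF det t])
  have n1: "\<i> - t \<noteq> 0" using t by (rule i_minus_nonzero)
  have n3: "\<i> - g \<noteq> 0" using gH by (rule i_minus_nonzero)
  have e1: "exp (automorphy_log a b c d t) = (\<i> - t) / z / (\<i> - g)"
    using n1 n3 z0 by (simp add: automorphy_log_def exp_diff exp_log_lo g_def z_def)
  have zg: "z * g = of_real a * t + of_real b" using z0 by (simp add: g_def moebius_def z_def[symmetric])
  have "z * (\<i> - g) = (of_real c * \<i> - of_real a) * t + (of_real d * \<i> - of_real b)"
    by (simp add: right_diff_distrib zg) (simp add: z_def algebra_simps)
  hence "(\<i> - t) / z / (\<i> - g) = (\<i> - t) / ((of_real c * \<i> - of_real a) * t + (of_real d * \<i> - of_real b))"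
    by (metis divide_divide_eq_left)
  thus ?thesis using e1 by simp
qed

lemma continuous_on_automorphy_log:
  assumes det: "a * d - b * c = 1"
  shows "continuous_on Hm (automorphy_log a b c d)"
proof -
  have c1: "continuous_on Hm (\<lambda>t. Ln (\<i> - t))"
    by (intro continuous_intros) (auto intro!: not_nonpos_Reals_if_Im_nonzero dest: Im_i_minus_pos)
  have cm: "continuous_on Hm (real_moebius a b c d)"
    unfolding moebius_def[abs_def] using moebius_denominator_nonzero[OF det] by (intro continuous_intros) auto
  have c3: "continuous_on Hm (\<lambda>t. Ln (\<i> - real_moebius a b c d t))"
  proof (intro continuous_on_Ln' continuous_intros cm)
    fix z assume "z \<in> Hm"
    hence "Im (real_moebius a b c d z) < 0" using real_moebius_in_Hm[OF det] by (simp add: Hm_def)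
    thus "\<i> - real_moebius a b c d z \<notin> \<real>\<^sub>\<le>\<^sub>0" by (intro not_nonpos_Reals_if_Im_nonzero) simp
  qed
  have c2: "continuous_on Hm (\<lambda>t. log_lo (of_real c * t + of_real d))"
  proof (cases "c = 0")
    case True thus ?thesis by (simp add: continuous_on_const)
  next
    case False
    have im: "Im (of_real c * t + of_real d) \<noteq> 0" if "t \<in> Hm" for t
      using that False by (simp add: Hm_def)
    have "continuous_on Hm (\<lambda>t. Ln (of_real c * t + of_real d))"
      by (intro continuous_on_Ln' continuous_intros) (use im not_nonpos_Reals_if_Im_nonzero in blast)
    thus ?thesis by (rule continuous_on_cong[THEN iffD1, rotated 2]) (use im log_lo_eq_Ln_if_Im in auto)
  qed
  show ?thesis unfolding automorphy_log_def[abs_def] by (intro continuous_on_diff c1 c2 c3)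
qed

lemma exp_automorphy_log_P1_chart:
  assumes det: "a * d - b * c = 1"
  shows "\<exists>A B C D. D \<noteq> 0 \<and> B \<noteq> 0 \<and>
     (\<forall>w. Im w < 0 \<longrightarrow> exp (automorphy_log a b c d (P1_chart p w)) = (A*w+B)/(C*w+D))"
proof -
  define \<alpha> where "\<alpha> = of_real c * \<i> - of_real a"
  define \<beta> where "\<beta> = of_real d * \<i> - of_real b"
  have eP: "exp (automorphy_log a b c d t) = (\<i> - t) / (\<alpha> * t + \<beta>)" if "t \<in> Hm" for t
    using exp_automorphy_log[OF det that] by (simp add: \<alpha>_def \<beta>_def)
  show ?thesis
  proof (cases p)
    case None
    have a0: "\<alpha> \<noteq> 0"
    proof
      assume "\<alpha> = 0"
      hence "a = 0" "c = 0" by (simp_all add: \<alpha>_def complex_eq_iff)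
      thus False using det by simp
    qed
    show ?thesis
    proof (intro exI conjI allI impI)
      show "- \<alpha> \<noteq> 0" using a0 by simp
      show "(1::complex) \<noteq> 0" by simp
      fix w :: complex assume w: "Im w < 0"
      have w0: "w \<noteq> 0" using w by auto
      have "exp (automorphy_log a b c d (P1_chart p w)) = (\<i> + 1/w) / (\<alpha> * (-1/w) + \<beta>)"
        using eP[OF P1_chart_in_Hm_iff[of p w, THEN iffD2, OF w]] None by (simp add: P1_chart_def)
      also have "\<dots> = ((\<i> * w + 1)/w) / ((\<beta> * w + - \<alpha>)/w)"
        using w0 by (simp add: field_simps)
      also have "\<dots> = (\<i> * w + 1) / (\<beta> * w + - \<alpha>)"
        using w0 by (cases "\<beta> * w + - \<alpha> = 0") (simp_all add: field_simps)
      finally show "exp (automorphy_log a b c d (P1_chart p w)) = (\<i> * w + 1) / (\<beta> * w + - \<alpha>)" .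
    qed
  next
    case (Some x)
    have D0: "\<alpha> * of_real x + \<beta> \<noteq> 0"
    proof
      assume "\<alpha> * of_real x + \<beta> = 0"
      then have "c * x + d = 0" "a * x + b = 0"
        by (simp_all add: \<alpha>_def \<beta>_def complex_eq_iff algebra_simps)
      then show False using unimodular_column_nonzero[OF det] by blast
    qed
    show ?thesis
    proof (intro exI conjI allI impI)
      show "\<alpha> * of_real x + \<beta> \<noteq> 0" by (fact D0)
      show "\<i> - of_real x \<noteq> 0" by (simp add: complex_eq_iff)
      fix w :: complex assume w: "Im w < 0"
      show "exp (automorphy_log a b c d (P1_chart p w)) = ((-1) * w + (\<i> - of_real x)) / (\<alpha> * w + (\<alpha> * of_real x + \<beta>))"
        using eP[OF P1_chart_in_Hm_iff[of p w, THEN iffD2, OF w]] Some by (simp add: P1_chart_def algebra_simps)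
    qed
  qed
qed

lemma constant_on_if_exp_constant:
  fixes h :: "'a::topological_space \<Rightarrow> complex"
  assumes "connected S" "continuous_on S h" "\<And>z. z \<in> S \<Longrightarrow> exp (h z) = c"
  shows "h constant_on S"
proof (rule continuous_discrete_range_constant[OF assms(1,2)])
  fix x assume "x \<in> S"
  show "\<exists>e>0. \<forall>y. y \<in> S \<and> h y \<noteq> h x \<longrightarrow> e \<le> cmod (h y - h x)"
  proof (intro exI[of _ "2 * pi"] conjI allI impI)
    fix y assume y: "y \<in> S \<and> h y \<noteq> h x"
    then have "exp (h y) = exp (h x)" using assms(3) \<open>x \<in> S\<close> by simp
    then obtain n :: int where n: "h y = h x + of_int (2 * n) * pi * \<i>" using exp_eq by blast
    then have "n \<noteq> 0" using y by auto
    have "cmod (h y - h x) = 2 * pi * \<bar>real_of_int n\<bar>" using n by (simp add: norm_mult)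
    then show "2 * pi \<le> cmod (h y - h x)" using \<open>n \<noteq> 0\<close> by simp
  qed simp
qed

lemma holomorphic_log_of_fraction_near_0:
  fixes A B C D :: complex
  assumes "B \<noteq> 0" "D \<noteq> 0"
  obtains \<delta> \<Lambda> where "\<delta> > 0" "\<Lambda> holomorphic_on ball 0 \<delta>"
    "\<And>w. w \<in> ball 0 \<delta> \<Longrightarrow> exp (\<Lambda> w) = (A * w + B) / (C * w + D)"
proof -
  obtain \<delta>1 where "\<delta>1 > 0" and den: "\<And>w. w \<in> ball 0 \<delta>1 \<Longrightarrow> C * w + D \<noteq> 0"
    using holomorphic_on_fraction_near_0[OF \<open>D \<noteq> 0\<close>] by blast
  obtain \<delta>2 where "\<delta>2 > 0" and num: "\<And>w. w \<in> ball 0 \<delta>2 \<Longrightarrow> A * w + B \<noteq> 0"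
    using holomorphic_on_fraction_near_0[OF \<open>B \<noteq> 0\<close>] by blast
  define \<delta> where "\<delta> = min \<delta>1 \<delta>2"
  have "\<delta> > 0" using \<open>\<delta>1 > 0\<close> \<open>\<delta>2 > 0\<close> by (simp add: \<delta>_def)
  have nonzero: "C * w + D \<noteq> 0" "A * w + B \<noteq> 0" if "w \<in> ball 0 \<delta>" for w
    using den[of w] num[of w] that by (simp_all add: \<delta>_def)
  obtain \<Lambda> where "\<Lambda> holomorphic_on ball 0 \<delta>"
    and "\<And>w. w \<in> ball 0 \<delta> \<Longrightarrow> exp (\<Lambda> w) = (A * w + B) / (C * w + D)"
  proof (rule holomorphic_logarithm_exists[of "ball 0 \<delta>" "\<lambda>w. (A * w + B) / (C * w + D)" 0])
    show "(\<lambda>w. (A * w + B) / (C * w + D)) holomorphic_on ball 0 \<delta>"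
      using nonzero(1) by (intro holomorphic_intros) auto
    show "(A * w + B) / (C * w + D) \<noteq> 0" if "w \<in> ball 0 \<delta>" for w
      using nonzero[OF that] by simp
  qed (use \<open>\<delta> > 0\<close> in auto)
  then show ?thesis using that \<open>\<delta> > 0\<close> by blast
qed

text \<open>The automorphy factor of the slash action extends holomorphically across every point of
  P^1(R): in the chart it is a continuous branch of \<open>Q(w)^(2 - r)\<close> for a fraction Q with
  Q(0) \<noteq> 0, so it differs from a holomorphic branch by a constant multiple of 2\<pi>i.\<close>
lemma automorphy_factor_extends:
  assumes det: "a * d - b * c = 1"
  obtains \<delta> K where "\<delta> > 0" "K holomorphic_on ball 0 \<delta>"
    "\<And>w. w \<in> ball 0 \<delta> \<Longrightarrow> Im w < 0 \<Longrightarrow> exp ((2 - r) * automorphy_log a b c d (P1_chart p w)) = K w"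
proof -
  obtain A B C D where "D \<noteq> 0" "B \<noteq> 0"
    and Q: "\<And>w. Im w < 0 \<Longrightarrow> exp (automorphy_log a b c d (P1_chart p w)) = (A * w + B) / (C * w + D)"
    using exp_automorphy_log_P1_chart[OF det, of p] by blast
  obtain \<delta> \<Lambda> where "\<delta> > 0" and \<Lambda>: "\<Lambda> holomorphic_on ball 0 \<delta>"
    and exp_\<Lambda>: "\<And>w. w \<in> ball 0 \<delta> \<Longrightarrow> exp (\<Lambda> w) = (A * w + B) / (C * w + D)"
    using holomorphic_log_of_fraction_near_0[OF \<open>B \<noteq> 0\<close> \<open>D \<noteq> 0\<close>] by blast
  define L where "L = ball 0 \<delta> \<inter> {w. Im w < 0}"
  have "continuous_on L (P1_chart p)"
    by (cases p) (auto simp: L_def P1_chart_def intro!: continuous_intros)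
  then have "continuous_on L (\<lambda>w. automorphy_log a b c d (P1_chart p w))"
    by (rule continuous_on_compose2[OF continuous_on_automorphy_log[OF det]])
      (auto simp: L_def P1_chart_in_Hm_iff)
  moreover have "continuous_on L \<Lambda>"
    using holomorphic_on_imp_continuous_on[OF \<Lambda>] by (rule continuous_on_subset) (auto simp: L_def)
  ultimately have "continuous_on L (\<lambda>w. automorphy_log a b c d (P1_chart p w) - \<Lambda> w)"
    by (intro continuous_intros)
  moreover have "exp (automorphy_log a b c d (P1_chart p w) - \<Lambda> w) = 1" if "w \<in> L" for w
  proof -
    have "exp (automorphy_log a b c d (P1_chart p w)) = exp (\<Lambda> w)"
      using that Q exp_\<Lambda> by (simp add: L_def)
    then show ?thesis by (simp add: exp_diff)
  qed
  moreover have "connected L"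
    unfolding L_def by (intro convex_connected convex_Int convex_ball convex_halfspace_Im_lt)
  ultimately have "(\<lambda>w. automorphy_log a b c d (P1_chart p w) - \<Lambda> w) constant_on L"
    using constant_on_if_exp_constant by blast
  then obtain k where k: "\<And>w. w \<in> L \<Longrightarrow> automorphy_log a b c d (P1_chart p w) - \<Lambda> w = k"
    unfolding constant_on_def by blast
  show ?thesis
  proof (rule that[OF \<open>\<delta> > 0\<close>])
    show "(\<lambda>w. exp ((2 - r) * (\<Lambda> w + k))) holomorphic_on ball 0 \<delta>"
      using \<Lambda> by (intro holomorphic_intros)
    show "exp ((2 - r) * automorphy_log a b c d (P1_chart p w)) = exp ((2 - r) * (\<Lambda> w + k))"
      if "w \<in> ball 0 \<delta>" "Im w < 0" for w
      using k[of w] that by (simp add: L_def algebra_simps)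
  qed
qed

lemma continuous_maps_small_ball:
  fixes m :: "'a::real_normed_vector \<Rightarrow> 'b::real_normed_vector"
  assumes "continuous_on (ball 0 \<delta>0) m" "\<delta>0 > 0" "m 0 = 0" "e > 0"
  obtains \<delta> where "\<delta> > 0" "\<delta> \<le> \<delta>0" "m ` ball 0 \<delta> \<subseteq> ball 0 e"
proof -
  have "open (ball 0 \<delta>0 \<inter> m -` ball 0 e)"
    using assms(1) by (intro continuous_open_preimage) auto
  moreover have "0 \<in> ball 0 \<delta>0 \<inter> m -` ball 0 e" using assms(2-4) by simp
  ultimately obtain \<delta> where "\<delta> > 0" and \<delta>: "ball 0 \<delta> \<subseteq> ball 0 \<delta>0 \<inter> m -` ball 0 e"
    using openE by blast
  have "m ` ball 0 (min \<delta> \<delta>0) \<subseteq> ball 0 e"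
    using \<delta> subset_ball[of "min \<delta> \<delta>0" \<delta> 0] by auto
  then show ?thesis using that[of "min \<delta> \<delta>0"] \<open>\<delta> > 0\<close> assms(2) by simp
qed

lemma regular_at_slash:
  assumes det: "a * d - b * c = 1" and "regular_at r \<phi> (moebius_P1R a b c d p)"
  shows "regular_at r (slash r a b c d \<phi>) p"
proof -
  obtain e G where "e > 0" "G holomorphic_on ball 0 e"
    and G: "\<And>w. w \<in> ball 0 e \<Longrightarrow> Im w < 0 \<Longrightarrow> G w = Pf r \<phi> (P1_chart (moebius_P1R a b c d p) w)"
    using assms(2) unfolding regular_at_def by blast
  obtain \<delta>1 m where "\<delta>1 > 0" "m holomorphic_on ball 0 \<delta>1" "m 0 = 0"
    and m: "\<And>w. w \<in> ball 0 \<delta>1 \<Longrightarrow> Im w < 0 \<Longrightarrow> P1_chart (moebius_P1R a b c d p) (m w) = real_moebius a b c d (P1_chart p w)"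
    using P1_chart_moebius[OF det] by metis
  obtain \<delta>2 K where "\<delta>2 > 0" "K holomorphic_on ball 0 \<delta>2"
    and K: "\<And>w. w \<in> ball 0 \<delta>2 \<Longrightarrow> Im w < 0 \<Longrightarrow> exp ((2 - r) * automorphy_log a b c d (P1_chart p w)) = K w"
    using automorphy_factor_extends[OF det] by metis
  have "continuous_on (ball 0 (min \<delta>1 \<delta>2)) m"
    using holomorphic_on_imp_continuous_on[OF \<open>m holomorphic_on ball 0 \<delta>1\<close>]
    by (rule continuous_on_subset) (simp add: subset_ball)
  then obtain \<delta> where "\<delta> > 0" "\<delta> \<le> min \<delta>1 \<delta>2" and m_ball: "m ` ball 0 \<delta> \<subseteq> ball 0 e"
    using continuous_maps_small_ball \<open>\<delta>1 > 0\<close> \<open>\<delta>2 > 0\<close> \<open>m 0 = 0\<close> \<open>e > 0\<close> by (metis min_less_iff_conj)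
  then have sub1: "ball 0 \<delta> \<subseteq> ball (0::complex) \<delta>1" and sub2: "ball 0 \<delta> \<subseteq> ball (0::complex) \<delta>2"
    by (simp_all add: subset_ball)
  show ?thesis unfolding regular_at_def
  proof (intro exI conjI ballI impI)
    show "\<delta> > 0" by fact
    have "(\<lambda>w. G (m w)) holomorphic_on ball 0 \<delta>"
      using holomorphic_on_compose_gen[unfolded o_def, OF _ \<open>G holomorphic_on ball 0 e\<close> m_ball]
        holomorphic_on_subset[OF \<open>m holomorphic_on ball 0 \<delta>1\<close> sub1] by blast
    then show "(\<lambda>w. K w * G (m w)) holomorphic_on ball 0 \<delta>"
      using holomorphic_on_subset[OF \<open>K holomorphic_on ball 0 \<delta>2\<close> sub2] by (intro holomorphic_intros)
    fix w assume w: "w \<in> ball 0 \<delta>" "Im w < 0"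
    have t: "P1_chart p w \<in> Hm" using w(2) by (simp add: P1_chart_in_Hm_iff)
    have chart: "P1_chart (moebius_P1R a b c d p) (m w) = real_moebius a b c d (P1_chart p w)"
      using m w sub1 by blast
    then have "Im (m w) < 0"
      using real_moebius_in_Hm[OF det t] P1_chart_in_Hm_iff by metis
    have "Pf r (slash r a b c d \<phi>) (P1_chart p w)
        = exp ((2 - r) * automorphy_log a b c d (P1_chart p w)) * Pf r \<phi> (real_moebius a b c d (P1_chart p w))"
      by (rule Pf_slash[OF det t])
    also have "\<dots> = K w * G (m w)"
    proof -
      have "w \<in> ball 0 \<delta>2" "m w \<in> ball 0 e" using w(1) sub2 m_ball by blast+
      then show ?thesis using K[of w] G[of "m w"] w(2) chart \<open>Im (m w) < 0\<close> by simp
    qed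
    finally show "K w * G (m w) = Pf r (slash r a b c d \<phi>) (P1_chart p w)" by simp
  qed
qed

lemma regular_at_lincomb:
  assumes "regular_at r \<phi> p" "regular_at r \<psi> p"
  shows "regular_at r (\<lambda>t. \<alpha> * \<phi> t + \<beta> * \<psi> t) p"
proof -
  obtain e1 G1 where "e1 > 0" "G1 holomorphic_on ball 0 e1"
    and G1: "\<forall>w\<in>ball 0 e1. Im w < 0 \<longrightarrow> G1 w = Pf r \<phi> (P1_chart p w)"
    using assms(1) unfolding regular_at_def by blast
  obtain e2 G2 where "e2 > 0" "G2 holomorphic_on ball 0 e2"
    and G2: "\<forall>w\<in>ball 0 e2. Im w < 0 \<longrightarrow> G2 w = Pf r \<psi> (P1_chart p w)"
    using assms(2) unfolding regular_at_def by blast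
  have "(\<lambda>w. \<alpha> * G1 w + \<beta> * G2 w) holomorphic_on ball 0 (min e1 e2)"
    using holomorphic_on_subset[OF \<open>G1 holomorphic_on ball 0 e1\<close> subset_ball[of "min e1 e2" e1 0]]
      holomorphic_on_subset[OF \<open>G2 holomorphic_on ball 0 e2\<close> subset_ball[of "min e1 e2" e2 0]]
    by (simp add: holomorphic_intros)
  moreover have "\<alpha> * G1 w + \<beta> * G2 w = Pf r (\<lambda>t. \<alpha> * \<phi> t + \<beta> * \<psi> t) (P1_chart p w)"
    if "w \<in> ball 0 (min e1 e2)" "Im w < 0" for w
  proof -
    have "G1 w = Pf r \<phi> (P1_chart p w)" "G2 w = Pf r \<psi> (P1_chart p w)"
      using G1 G2 that by auto
    then show ?thesis by (simp add: Pf_def distrib_left mult.left_commute)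
  qed
  moreover have "min e1 e2 > 0" using \<open>e1 > 0\<close> \<open>e2 > 0\<close> by simp
  ultimately show ?thesis unfolding regular_at_def by blast
qed

lemma finite_not_regular_at:
  assumes "Dfs r h"
  shows "finite {p. \<not> regular_at r h p}"
proof -
  obtain E where "finite E" "DomegaE r E h" using assms unfolding Dfs_def by blast
  then show ?thesis by (rule_tac finite_subset[of _ E]) (auto simp: DomegaE_iff_regular_at)
qed

lemma bsing_eq_not_regular_at:
  assumes "Dfs r h"
  shows "bsing r h = {p. \<not> regular_at r h p}"
proof -
  have "h holomorphic_on Hm" using assms by (auto simp: Dfs_def DomegaE_iff_regular_at)
  then have "DomegaE r E h \<longleftrightarrow> {p. \<not> regular_at r h p} \<subseteq> E" for E
    by (auto simp: DomegaE_iff_regular_at)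
  then show ?thesis
    unfolding bsing_def using finite_not_regular_at[OF assms] by (intro the_equality) auto
qed

lemma regular_at_if_regular_at_image:
  assumes det: "a * d - b * c = 1"
    and difference: "\<And>p. regular_at r (\<lambda>t. inverse \<mu> * slash r a b c d h t - h t) p"
    and "regular_at r h (moebius_P1R a b c d p)"
  shows "regular_at r h p"
proof -
  have "regular_at r (\<lambda>t. inverse \<mu> * slash r a b c d h t + (- 1) * (inverse \<mu> * slash r a b c d h t - h t)) p"
    using regular_at_slash[OF det assms(3)] difference by (rule regular_at_lincomb)
  moreover have "(\<lambda>t. inverse \<mu> * slash r a b c d h t + (- 1) * (inverse \<mu> * slash r a b c d h t - h t)) = h"
    by (rule ext) simp
  ultimately show ?thesis by (simp only:)
qed

theorem lemma3p1:
  fixes r \<mu> :: complex and a b c d :: real and \<aa> :: "real option" and h :: "complex \<Rightarrow> complex"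
  assumes "a * d - b * c = 1"
    and "parabolic a b c d"
    and "fixed_P1R a b c d \<aa>"
    and "\<forall>p. fixed_P1R a b c d p \<longrightarrow> p = \<aa>"
    and "\<mu> \<noteq> 0"
    and "Dfs r h"
    and "Domega r (\<lambda>t. inverse \<mu> * slash r a b c d h t - h t)"
  shows "bsing r h \<subseteq> {\<aa>}"
proof -
  have difference: "regular_at r (\<lambda>t. inverse \<mu> * slash r a b c d h t - h t) p" for p
    using assms(7) by (simp add: Domega_def DomegaE_iff_regular_at)
  obtain H :: "real option \<Rightarrow> real" and \<delta> where "\<delta> \<noteq> 0"
    and shift: "\<And>p. p \<noteq> \<aa> \<Longrightarrow> moebius_P1R a b c d p \<noteq> \<aa> \<and> H (moebius_P1R a b c d p) = H p + \<delta>"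
    using parabolic_translation_coordinate[OF assms(2,4)] by blast
  show ?thesis
    unfolding bsing_eq_not_regular_at[OF assms(6)]
  proof (rule finite_invariant_subset_singleton[where f = "moebius_P1R a b c d" and H = H])
    show "\<And>p. p \<noteq> \<aa> \<Longrightarrow> moebius_P1R a b c d p \<noteq> \<aa> \<and> H (moebius_P1R a b c d p) = H p + \<delta>"
      by (fact shift)
    show "moebius_P1R a b c d ` {p. \<not> regular_at r h p} \<subseteq> {p. \<not> regular_at r h p}"
      using regular_at_if_regular_at_image[OF assms(1) difference] by blast
  qed (use \<open>\<delta> \<noteq> 0\<close> finite_not_regular_at[OF assms(6)] in auto)
qed

end
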